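(* Let $T(n)$ be the complete binary tree on $n$ vertices (every level except possibly the last completely filled, and the nodes of the last level as far left as possible), and let $D(n)$ be the digraph obtained from $T(n)$ by replacing each undirected edge $\{u,v\}$ by the two directed edges $(u,v)$ and $(v,u)$. Then $D(n)$ has zig-zag number at most $2$ (witnessed by a depth-first preorder of the vertices from the root), while its directed path-width is $\Omega(\log n)$.
   Context: A linear ordering $\omega=(v_1,\dots,v_n)$ of the vertices of a digraph is a $z$-topological ordering if every directed simple path has, for each $i$, at most $z$ edges with one endpoint in $\{v_1,\dots,v_i\}$ and the other in $\{v_{i+1},\dots,v_n\}$; the zig-zag number is the least such $z$. A directed path decomposition of $G=(V,E)$ is a sequence $X_1,\dots,X_p\subseteq V$ covering $V$, with $X_i\cap X_k\subseteq X_j$ for $i<j<k$, and such that for every edge $(u,v)$ there are $i\le j$ with $u\in X_i$, $v\in X_j$; its width is $\max_j|X_j|$, and the directed path-width is the minimum width. *)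

theory Defs
  imports Complex_Main
begin

definition dir_simple_path :: "('a \<times> 'a) set \<Rightarrow> 'a list \<Rightarrow> bool" where
  "dir_simple_path E p \<longleftrightarrow> p \<noteq> [] \<and> distinct p \<and>
     (\<forall>k. Suc k < length p \<longrightarrow> (p ! k, p ! Suc k) \<in> E)"

definition linear_ordering :: "'a set \<Rightarrow> 'a list \<Rightarrow> bool" where
  "linear_ordering V \<omega> \<longleftrightarrow> distinct \<omega> \<and> set \<omega> = V"

definition crossing_edges :: "'a set \<Rightarrow> 'a list \<Rightarrow> nat" where
  "crossing_edges S p = card {k. Suc k < length p \<and> ((p ! k \<in> S) \<noteq> (p ! Suc k \<in> S))}"

definition z_topological :: "'a set \<Rightarrow> ('a \<times> 'a) set \<Rightarrow> 'a list \<Rightarrow> nat \<Rightarrow> bool" where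
  "z_topological V E \<omega> z \<longleftrightarrow> linear_ordering V \<omega> \<and>
     (\<forall>p. dir_simple_path E p \<longrightarrow>
        (\<forall>i \<le> length \<omega>. crossing_edges (set (take i \<omega>)) p \<le> z))"

definition zigzag_number :: "'a set \<Rightarrow> ('a \<times> 'a) set \<Rightarrow> nat" where
  "zigzag_number V E = (LEAST z. \<exists>\<omega>. z_topological V E \<omega> z)"

definition dir_path_decomp :: "'a set \<Rightarrow> ('a \<times> 'a) set \<Rightarrow> 'a set list \<Rightarrow> bool" where
  "dir_path_decomp V E X \<longleftrightarrow> X \<noteq> [] \<and> (\<forall>j < length X. X ! j \<subseteq> V) \<and>
     (\<Union> (set X)) = V \<and>
     (\<forall>i j k. i < j \<and> j < k \<and> k < length X \<longrightarrow> X ! i \<inter> X ! k \<subseteq> X ! j) \<and>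
     (\<forall>(u, v) \<in> E. \<exists>i j. i \<le> j \<and> j < length X \<and> u \<in> X ! i \<and> v \<in> X ! j)"

definition dpd_width :: "'a set list \<Rightarrow> nat" where
  "dpd_width X = Max (card ` set X)"

definition directed_pathwidth :: "'a set \<Rightarrow> ('a \<times> 'a) set \<Rightarrow> nat" where
  "directed_pathwidth V E = (LEAST w. \<exists>X. dir_path_decomp V E X \<and> dpd_width X = w)"

(* Complete binary tree T(n) in heap numbering: vertices 1..n, root 1,
   children of v are 2v and 2v+1; undirected edges {v div 2, v} for 2 \<le> v \<le> n.
   This fills each level completely and the last one from the left. *)
definition cbt_vertices :: "nat \<Rightarrow> nat set" where
  "cbt_vertices n = {1..n}"

definition cbt_edges :: "nat \<Rightarrow> nat set set" where
  "cbt_edges n = {{v div 2, v} | v. 2 \<le> v \<and> v \<le> n}"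

definition D_edges :: "nat \<Rightarrow> (nat \<times> nat) set" where
  "D_edges n = {(u, v). {u, v} \<in> cbt_edges n}"

function preorder :: "nat \<Rightarrow> nat \<Rightarrow> nat list" where
  "preorder n v = (if v = 0 \<or> v > n then [] else
                     v # preorder n (2 * v) @ preorder n (2 * v + 1))"
  by pat_completeness auto
termination by (relation "measure (\<lambda>(n, v). Suc n - v)") auto

end

theory Submission
  imports Defs "HOL-Library.Discrete_Functions"
begin

(* A depth-first preorder lists every vertex after its parent, so each prefix is closed under
   parents.  A simple path in the tree climbs to its top vertex and then descends; while climbing
   it can only enter a parent-closed set and while descending only leave it, so it crosses the
   cut at most twice.

   For the lower bound, let X be any directed path decomposition of D(n).  Since both (u,v) and
   (v,u) are edges, every tree edge lies in a bag.  By induction on h, some bag meets every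
   complete subtree of height h in at least h div 2 + 1 vertices: take bags J0, J1, J2 given by
   the induction hypothesis for three of the grandchild subtrees and let Jk lie between the other
   two.  The other two grandchild subtrees are connected through the root avoiding the k-th one,
   so the interval property puts a further vertex of the subtree into bag Jk.  The whole tree
   contains a complete subtree of height floor_log n - 1, which gives the logarithmic bound. *)

lemma div_power2_diff: "a \<le> b \<Longrightarrow> (x::nat) div 2^b = x div 2^a div 2^(b - a)"
  by (metis div_mult2_eq le_add_diff_inverse power_add)

lemma div_power2_Suc: "(x::nat) div 2^Suc k = x div 2^k div 2"
  by (simp only: power_Suc2 div_mult2_eq)

lemma ancestor_same_level_unique:
  assumes "(x::nat) div 2^a = p" "x div 2^b = q" "k \<le> p" "p < 2*k" "k \<le> q" "q < 2*k"
  shows "p = q"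
proof -
  have below: "q < k" if "x div 2^a = p" "x div 2^b = q" "a < b" "p < 2*k" for a b p q
  proof -
    have "q = p div 2^(b - a)" using that div_power2_diff[of a b x] by simp
    also have "\<dots> \<le> p div 2^1" using that(3) by (intro div_le_mono2 power_increasing) auto
    also have "\<dots> < k" using that(4) by simp
    finally show ?thesis .
  qed
  show ?thesis
    using below[of a p b q] below[of b q a p] assms by (cases a b rule: linorder_cases) auto
qed

lemma ancestor_floor_log: "1 \<le> x \<Longrightarrow> x div 2^floor_log x = 1"
  using floor_log_exp2_le[of x] floor_log_exp2_gt[of x] by (intro div_nat_eqI) auto

definition parent_closed :: "nat set \<Rightarrow> bool" where
  "parent_closed S \<longleftrightarrow> (\<forall>v\<in>S. 2 \<le> v \<longrightarrow> v div 2 \<in> S)"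

section \<open>The preorder is 2-topological\<close>

declare preorder.simps [simp del]

lemma preorder_Cons:
  "1 \<le> v \<Longrightarrow> v \<le> n \<Longrightarrow> preorder n v = v # preorder n (2*v) @ preorder n (2*v + 1)"
  by (subst preorder.simps) simp

lemma set_preorder: "set (preorder n v) = {x. 1 \<le> v \<and> x \<le> n \<and> (\<exists>k. x div 2^k = v)}"
proof (intro set_eqI iffI)
  fix x assume "x \<in> set (preorder n v)"
  then show "x \<in> {x. 1 \<le> v \<and> x \<le> n \<and> (\<exists>k. x div 2^k = v)}"
  proof (induction n v rule: preorder.induct)
    case (1 n v)
    then have v: "1 \<le> v" "v \<le> n"
      and "x = v \<or> x \<in> set (preorder n (2*v)) \<or> x \<in> set (preorder n (2*v + 1))"
      by (subst (asm) preorder.simps; auto split: if_splits)+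
    moreover have "\<exists>k. x div 2^k = v" if "x div 2^k = 2*v \<or> x div 2^k = 2*v + 1" for k
      using that by (intro exI[of _ "Suc k"], subst div_power2_Suc) auto
    ultimately show ?case using 1(1,2) by (auto intro: exI[of _ 0])
  qed
next
  fix x assume "x \<in> {x. 1 \<le> v \<and> x \<le> n \<and> (\<exists>k. x div 2^k = v)}"
  then obtain k where "x div 2^k = v" "1 \<le> v" "x \<le> n" by blast
  then show "x \<in> set (preorder n v)"
  proof (induction k arbitrary: v)
    case 0
    then show ?case by (simp add: preorder_Cons)
  next
    case (Suc k)
    define w where "w = x div 2^k"
    have "w div 2 = v" using Suc.prems(1) by (simp only: w_def div_power2_Suc)
    then have "w = 2*v \<or> w = 2*v + 1" and "v \<le> n"
      using Suc.prems div_le_dividend[of x "2^Suc k"] by auto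
    moreover have "x \<in> set (preorder n w)" using Suc \<open>w div 2 = v\<close> by (auto simp: w_def)
    ultimately show ?case using Suc.prems(2) preorder_Cons by auto
  qed
qed

lemma in_set_preorderD: "x \<in> set (preorder n v) \<Longrightarrow> 1 \<le> v \<and> v \<le> x \<and> x \<le> n"
  by (auto simp: set_preorder intro: div_le_dividend)

lemma set_preorder_root: "set (preorder n 1) = {1..n}"
proof -
  have "x \<in> set (preorder n 1)" if "1 \<le> x" "x \<le> n" for x
    using that ancestor_floor_log[OF that(1)] unfolding set_preorder by blast
  then show ?thesis by (auto dest: in_set_preorderD)
qed

lemma distinct_preorder: "distinct (preorder n v)"
proof (induction n v rule: preorder.induct)
  case (1 n v)
  show ?case
  proof (cases "1 \<le> v \<and> v \<le> n")
    case False
    then show ?thesis by (subst preorder.simps) auto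
  next
    case True
    have "set (preorder n (2*v)) \<inter> set (preorder n (2*v + 1)) = {}"
      using ancestor_same_level_unique[of _ _ "2*v" _ "2*v + 1" "2*v"] True
      by (auto simp: set_preorder)
    moreover have "v \<notin> set (preorder n (2*v)) \<union> set (preorder n (2*v + 1))"
      using in_set_preorderD[of v n "2*v"] in_set_preorderD[of v n "2*v + 1"] True by auto
    ultimately show ?thesis using 1 True by (simp add: preorder_Cons)
  qed
qed

lemma preorder_infix:
  "x \<in> set (preorder n v) \<Longrightarrow> \<exists>xs ys. preorder n v = xs @ preorder n x @ ys"
proof (induction n v rule: preorder.induct)
  case (1 n v)
  then have v: "1 \<le> v" "v \<le> n" using in_set_preorderD by fastforce+
  then have "x = v \<or> x \<in> set (preorder n (2*v)) \<or> x \<in> set (preorder n (2*v + 1))"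
    using "1.prems" by (simp add: preorder_Cons)
  then show ?case
  proof (elim disjE)
    assume "x = v"
    then show ?thesis by (intro exI[of _ "[]"]) simp
  next
    assume "x \<in> set (preorder n (2*v))"
    then obtain xs ys where "preorder n (2*v) = xs @ preorder n x @ ys" using 1(1) v by auto
    then show ?thesis using v
      by (intro exI[of _ "v # xs"] exI[of _ "ys @ preorder n (2*v + 1)"]) (simp add: preorder_Cons)
  next
    assume "x \<in> set (preorder n (2*v + 1))"
    then obtain xs ys where "preorder n (2*v + 1) = xs @ preorder n x @ ys" using 1(2) v by auto
    then show ?thesis using v
      by (intro exI[of _ "v # preorder n (2*v) @ xs"] exI[of _ ys]) (simp add: preorder_Cons)
  qed
qed

lemma preorder_parent_before:
  assumes "2 \<le> v" "v \<le> n"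
  shows "\<exists>xs ys. preorder n 1 = xs @ v div 2 # ys \<and> v \<in> set ys"
proof -
  have "1 \<le> v div 2" "v div 2 \<le> n" using assms by auto
  then have "v div 2 \<in> set (preorder n 1)" using set_preorder_root by auto
  then obtain xs ys where root: "preorder n 1 = xs @ preorder n (v div 2) @ ys"
    using preorder_infix by blast
  have "v \<in> set (preorder n v)" using assms by (simp add: preorder_Cons)
  moreover have "v = 2 * (v div 2) \<or> v = 2 * (v div 2) + 1" by auto
  ultimately have "v \<in> set (preorder n (2 * (v div 2))) \<union> set (preorder n (2 * (v div 2) + 1))"
    by (metis Un_iff)
  then obtain L where "preorder n (v div 2) = v div 2 # L" "v \<in> set L"
    using \<open>1 \<le> v div 2\<close> \<open>v div 2 \<le> n\<close> preorder_Cons by fastforce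
  then show ?thesis using root by (intro exI[of _ xs] exI[of _ "L @ ys"]) simp
qed

lemma in_set_take_before:
  assumes "distinct (xs @ a # ys)" "b \<in> set ys" "b \<in> set (take i (xs @ a # ys))"
  shows "a \<in> set (take i (xs @ a # ys))"
proof (cases "i \<le> length xs")
  case True
  then show ?thesis using assms by (auto dest: in_set_takeD)
next
  case False
  then show ?thesis by (auto simp: take_Cons' Suc_diff_le not_le)
qed

lemma parent_closed_preorder_prefix: "parent_closed (set (take i (preorder n 1)))"
  unfolding parent_closed_def
proof (intro ballI impI)
  fix v assume v: "v \<in> set (take i (preorder n 1))" "2 \<le> v"
  then have "v \<in> set (preorder n 1)" by (auto dest: in_set_takeD)
  then have "v \<le> n" using set_preorder_root by auto
  then obtain xs ys where "preorder n 1 = xs @ v div 2 # ys" "v \<in> set ys"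
    using preorder_parent_before v(2) by blast
  then show "v div 2 \<in> set (take i (preorder n 1))"
    using in_set_take_before distinct_preorder v(1) by metis
qed

lemma D_edges_cases:
  "(a, b) \<in> D_edges n \<Longrightarrow> (a = b div 2 \<and> 2 \<le> b \<and> b \<le> n) \<or> (b = a div 2 \<and> 2 \<le> a \<and> a \<le> n)"
  unfolding D_edges_def cbt_edges_def by (auto simp: doubleton_eq_iff)

lemma D_edges_parent: "2 \<le> w \<Longrightarrow> w \<le> n \<Longrightarrow> (w div 2, w) \<in> D_edges n \<and> (w, w div 2) \<in> D_edges n"
  unfolding D_edges_def cbt_edges_def by (auto simp: insert_commute)

lemma D_edges_subset: "D_edges n \<subseteq> cbt_vertices n \<times> cbt_vertices n"
  using D_edges_cases by (fastforce simp: cbt_vertices_def)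

lemma simple_path_step:
  assumes "dir_simple_path (D_edges n) p" "Suc k < length p"
  shows "(p ! k = p ! Suc k div 2 \<and> 2 \<le> p ! Suc k) \<or> (p ! Suc k = p ! k div 2 \<and> 2 \<le> p ! k)"
proof -
  have "(p ! k, p ! Suc k) \<in> D_edges n" using assms unfolding dir_simple_path_def by blast
  from D_edges_cases[OF this] show ?thesis by blast
qed

(* After stepping down from a vertex, stepping up would return to it. *)
lemma simple_path_keeps_descending:
  assumes p: "dir_simple_path (D_edges n) p"
    and "p ! k = p ! Suc k div 2 \<and> 2 \<le> p ! Suc k" "k \<le> j" "Suc j < length p"
  shows "p ! j = p ! Suc j div 2 \<and> 2 \<le> p ! Suc j"
  using assms(2-)
proof (induction j)
  case (Suc j)
  show ?case
  proof (cases "k \<le> j")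
    case True
    then have down: "p ! j = p ! Suc j div 2" using Suc by simp
    show ?thesis
    proof (rule ccontr)
      assume "\<not> ?thesis"
      then have "p ! Suc (Suc j) = p ! Suc j div 2" using simple_path_step[OF p Suc.prems(3)] by blast
      then have "p ! Suc (Suc j) = p ! j" using down by simp
      then show False using p Suc.prems(3) by (simp add: dir_simple_path_def nth_eq_iff_index_eq)
    qed
  next
    case False
    then show ?thesis using Suc by (simp add: le_Suc_eq)
  qed
qed simp

lemma simple_path_up_then_down:
  assumes p: "dir_simple_path (D_edges n) p"
  obtains m where
    "\<And>k. k < m \<Longrightarrow> Suc k < length p \<Longrightarrow> p ! Suc k = p ! k div 2 \<and> 2 \<le> p ! k"
    "\<And>k. m \<le> k \<Longrightarrow> Suc k < length p \<Longrightarrow> p ! k = p ! Suc k div 2 \<and> 2 \<le> p ! Suc k"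
proof -
  define down where "down k \<longleftrightarrow> p ! k = p ! Suc k div 2 \<and> 2 \<le> p ! Suc k" for k
  define m where "m = (LEAST k. \<forall>j\<ge>k. Suc j < length p \<longrightarrow> down j)"
  have all_down: "\<forall>j\<ge>m. Suc j < length p \<longrightarrow> down j"
    unfolding m_def by (rule LeastI[of _ "length p"]) simp
  have not_down: "\<not> down k" if "k < m" for k
  proof
    assume "down k"
    then have "\<forall>j\<ge>k. Suc j < length p \<longrightarrow> down j"
      using simple_path_keeps_descending[OF p] unfolding down_def by blast
    then have "m \<le> k" unfolding m_def by (rule Least_le)
    then show False using that by simp
  qed
  show ?thesis
  proof (rule that)
    fix k assume "k < m" "Suc k < length p"
    then show "p ! Suc k = p ! k div 2 \<and> 2 \<le> p ! k"
      using simple_path_step[OF p] not_down unfolding down_def by blast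
  next
    fix k assume "m \<le> k" "Suc k < length p"
    then show "p ! k = p ! Suc k div 2 \<and> 2 \<le> p ! Suc k" using all_down unfolding down_def by blast
  qed
qed

lemma card_changes_le_1:
  assumes "\<And>k. a \<le> k \<Longrightarrow> k < b \<Longrightarrow> f k \<Longrightarrow> f (Suc k)"
  shows "card {k. a \<le> k \<and> k < b \<and> f k \<noteq> f (Suc k)} \<le> 1" (is "card ?K \<le> 1")
proof -
  have stays: "f j" if "f i" "a \<le> i" "i \<le> j" "j \<le> b" for i j
    using that
  proof (induction j)
    case (Suc j)
    show ?case
    proof (cases "i \<le> j")
      case True
      then show ?thesis using Suc assms[of j] by simp
    next
      case False
      then show ?thesis using Suc by (simp add: le_Suc_eq)
    qed
  qed simp
  have change: "\<not> f k \<and> f (Suc k) \<and> a \<le> k \<and> k < b" if "k \<in> ?K" for k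
    using that assms by auto
  have ordered: "k = k'" if "k \<in> ?K" "k' \<in> ?K" "k \<le> k'" for k k'
  proof (rule ccontr)
    assume "k \<noteq> k'"
    then have "Suc k \<le> k'" using that(3) by simp
    then have "f k'" using change[OF that(1)] change[OF that(2)] stays[of "Suc k" k'] by simp
    then show False using change[OF that(2)] by simp
  qed
  have "k = k'" if "k \<in> ?K" "k' \<in> ?K" for k k'
    using ordered[OF that] ordered[OF that(2,1)] by linarith
  moreover have "finite ?K" by (rule finite_subset[of _ "{..<b}"]) auto
  ultimately show ?thesis using card_le_Suc0_iff_eq[of ?K] by auto
qed

lemma crossing_edges_le_2:
  assumes S: "parent_closed S" and p: "dir_simple_path (D_edges n) p"
  shows "crossing_edges S p \<le> 2"
proof -
  obtain m where
    up: "\<And>k. k < m \<Longrightarrow> Suc k < length p \<Longrightarrow> p ! Suc k = p ! k div 2 \<and> 2 \<le> p ! k" and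
    down: "\<And>k. m \<le> k \<Longrightarrow> Suc k < length p \<Longrightarrow> p ! k = p ! Suc k div 2 \<and> 2 \<le> p ! Suc k"
    using simple_path_up_then_down[OF p] by blast
  have enter: "p ! Suc k \<in> S" if "k < m" "Suc k < length p" "p ! k \<in> S" for k
    using up[OF that(1,2)] that(3) S unfolding parent_closed_def by metis
  have leave: "p ! Suc k \<notin> S" if "m \<le> k" "Suc k < length p" "p ! k \<notin> S" for k
    using down[OF that(1,2)] that(3) S unfolding parent_closed_def by metis
  let ?in = "\<lambda>k. p ! k \<in> S" and ?out = "\<lambda>k. p ! k \<notin> S"
  have "card {k. 0 \<le> k \<and> k < min m (length p - 1) \<and> ?in k \<noteq> ?in (Suc k)} \<le> 1"
    using enter by (intro card_changes_le_1) auto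
  moreover have "card {k. m \<le> k \<and> k < length p - 1 \<and> ?out k \<noteq> ?out (Suc k)} \<le> 1"
    using leave by (intro card_changes_le_1) auto
  moreover have "{k. Suc k < length p \<and> ?in k \<noteq> ?in (Suc k)} \<subseteq>
      {k. 0 \<le> k \<and> k < min m (length p - 1) \<and> ?in k \<noteq> ?in (Suc k)}
      \<union> {k. m \<le> k \<and> k < length p - 1 \<and> ?out k \<noteq> ?out (Suc k)}"
    (is "?K \<subseteq> ?Up \<union> ?Down") by auto
  then have "card ?K \<le> card (?Up \<union> ?Down)"
    by (intro card_mono) auto
  ultimately show ?thesis
    unfolding crossing_edges_def using card_Un_le[of ?Up ?Down] by linarith
qed

theorem preorder_z_topological: "z_topological (cbt_vertices n) (D_edges n) (preorder n 1) 2"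
  unfolding z_topological_def linear_ordering_def cbt_vertices_def
  using distinct_preorder set_preorder_root
    crossing_edges_le_2[OF parent_closed_preorder_prefix] by simp

lemma zigzag_number_le_2: "zigzag_number (cbt_vertices n) (D_edges n) \<le> 2"
  unfolding zigzag_number_def using preorder_z_topological by (intro Least_le) blast

section \<open>Path decompositions\<close>

definition share_bag :: "'a set list \<Rightarrow> 'a \<Rightarrow> 'a \<Rightarrow> bool" where
  "share_bag X a b \<longleftrightarrow> (\<exists>j<length X. a \<in> X ! j \<and> b \<in> X ! j)"

definition interval_bags :: "'a set list \<Rightarrow> bool" where
  "interval_bags X \<longleftrightarrow> (\<forall>i j k. i < j \<and> j < k \<and> k < length X \<longrightarrow> X ! i \<inter> X ! k \<subseteq> X ! j)"

definition share_bag_in :: "'a set list \<Rightarrow> 'a set \<Rightarrow> 'a \<Rightarrow> 'a \<Rightarrow> bool" where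
  "share_bag_in X C a b \<longleftrightarrow> a \<in> C \<and> b \<in> C \<and> share_bag X a b"

lemma symp_share_bag_in: "symp (share_bag_in X C)"
  unfolding share_bag_in_def share_bag_def by (auto intro: sympI)

lemma interval_bagsD:
  assumes "interval_bags X" "x \<in> X ! a" "x \<in> X ! b" "a \<le> c" "c \<le> b" "b < length X"
  shows "x \<in> X ! c"
proof (cases "a = c \<or> c = b")
  case False
  then have "X ! a \<inter> X ! b \<subseteq> X ! c" using assms unfolding interval_bags_def by auto
  then show ?thesis using assms(2,3) by blast
qed (use assms in auto)

lemma share_bag_chain_meets_between:
  assumes "interval_bags X" "(share_bag_in X C)\<^sup>*\<^sup>* x y" "x \<in> C"
    "x \<in> X ! a" "y \<in> X ! b" "a \<le> j" "j \<le> b" "b < length X"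
  shows "\<exists>c\<in>C. c \<in> X ! j"
  using assms(2,5-8)
proof (induction arbitrary: b rule: rtranclp_induct)
  case base
  then show ?case using interval_bagsD[OF assms(1,4)] assms(3) by blast
next
  case (step y z)
  obtain t where t: "t < length X" "y \<in> X ! t" "z \<in> X ! t" "z \<in> C"
    using step(2) unfolding share_bag_in_def share_bag_def by blast
  show ?case
  proof (cases "j \<le> t")
    case True
    then show ?thesis using step.IH[of t] step.prems t by blast
  next
    case False
    then have "z \<in> X ! j" using interval_bagsD[OF assms(1) t(3) step.prems(1)] step.prems by simp
    then show ?thesis using t(4) by blast
  qed
qed

lemma share_bag_chain_adds_to_middle_bag:
  assumes "interval_bags X" "(share_bag_in X (T - B))\<^sup>*\<^sup>* x y" "x \<in> T - B"
    "x \<in> X ! a" "y \<in> X ! b" "a \<le> j" "j \<le> b" "b < length X" "B \<subseteq> T" "finite T"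
  shows "card (X ! j \<inter> B) < card (X ! j \<inter> T)"
proof -
  obtain c where "c \<in> T - B" "c \<in> X ! j"
    using share_bag_chain_meets_between[OF assms(1-8)] by blast
  then have "X ! j \<inter> B \<subset> X ! j \<inter> T" using assms(9) by blast
  then show ?thesis using assms(10) by (intro psubset_card_mono) auto
qed

lemma dir_path_decomp_interval_bags: "dir_path_decomp V E X \<Longrightarrow> interval_bags X"
  unfolding dir_path_decomp_def interval_bags_def by (elim conjE) assumption

lemma dir_path_decomp_covers:
  assumes "dir_path_decomp V E X" "v \<in> V"
  shows "\<exists>j<length X. v \<in> X ! j"
proof -
  have "\<Union> (set X) = V" using assms(1) unfolding dir_path_decomp_def by (elim conjE) assumption
  then have "v \<in> \<Union> (set X)" using assms(2) by simp
  then show ?thesis by (auto simp: in_set_conv_nth)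
qed

lemma dir_path_decomp_share_bag:
  assumes X: "dir_path_decomp V E X" and "(u, v) \<in> E" "(v, u) \<in> E"
  shows "share_bag X u v"
proof -
  have edges: "\<forall>(a, b)\<in>E. \<exists>i j. i \<le> j \<and> j < length X \<and> a \<in> X ! i \<and> b \<in> X ! j"
    using X unfolding dir_path_decomp_def by (elim conjE) assumption
  have edge: "\<exists>i j. i \<le> j \<and> j < length X \<and> a \<in> X ! i \<and> b \<in> X ! j" if "(a, b) \<in> E" for a b
    using bspec[OF edges that] by simp
  obtain i j where ij: "i \<le> j" "j < length X" "u \<in> X ! i" "v \<in> X ! j"
    using edge[OF assms(2)] by blast
  obtain i' j' where ij': "i' \<le> j'" "j' < length X" "v \<in> X ! i'" "u \<in> X ! j'"
    using edge[OF assms(3)] by blast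
  note interval = dir_path_decomp_interval_bags[OF X]
  show ?thesis
  proof (cases "j \<le> j'")
    case True
    then have "u \<in> X ! j" using interval_bagsD[OF interval ij(3) ij'(4)] ij ij' by auto
    then show ?thesis unfolding share_bag_def using ij by blast
  next
    case False
    then have "v \<in> X ! j'" using interval_bagsD[OF interval ij'(3) ij(4)] ij ij' by auto
    then show ?thesis unfolding share_bag_def using ij' by blast
  qed
qed

lemma dir_path_decomp_exists: "E \<subseteq> V \<times> V \<Longrightarrow> dir_path_decomp V E [V]"
  unfolding dir_path_decomp_def by (auto intro!: exI[of _ 0])

lemma directed_pathwidth_ge:
  assumes "E \<subseteq> V \<times> V"
    and "\<And>X. dir_path_decomp V E X \<Longrightarrow> \<exists>j<length X. k \<le> card (X ! j)"
  shows "k \<le> directed_pathwidth V E"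
proof -
  have "\<exists>X. dir_path_decomp V E X \<and> dpd_width X = directed_pathwidth V E"
    unfolding directed_pathwidth_def
    by (rule LeastI_ex) (use dir_path_decomp_exists[OF assms(1)] in blast)
  then obtain X where X: "dir_path_decomp V E X" "dpd_width X = directed_pathwidth V E" by blast
  obtain j where j: "j < length X" "k \<le> card (X ! j)" using assms(2)[OF X(1)] by blast
  have "card (X ! j) \<le> dpd_width X"
    unfolding dpd_width_def using j(1) by (intro Max_ge) auto
  then show ?thesis using X(2) j(2) by simp
qed

section \<open>A logarithmic lower bound on the directed path-width\<close>

(* The vertices below u at depth at most h in the infinite heap; they all lie in T(n)
   iff (u + 1) * 2^h \<le> n + 1. *)
definition heap_subtree :: "nat \<Rightarrow> nat \<Rightarrow> nat set" where
  "heap_subtree h u = {x. \<exists>i\<le>h. x div 2^i = u}"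

lemma heap_subtree_root: "u \<in> heap_subtree h u"
  unfolding heap_subtree_def by (intro CollectI exI[of _ 0]) simp

lemma heap_subtree_bounds:
  assumes "x \<in> heap_subtree h u"
  shows "u \<le> x" "x < (u + 1) * 2^h"
proof -
  obtain i where i: "i \<le> h" "x div 2^i = u" using assms unfolding heap_subtree_def by blast
  show "u \<le> x" using i(2) div_le_dividend[of x "2^i"] by simp
  have "x = x div 2^i * 2^i + x mod 2^i" by (rule div_mult_mod_eq[symmetric])
  moreover have "x mod 2^i < 2^i" by simp
  ultimately have "x < x div 2^i * 2^i + 2^i" by linarith
  then have "x < (x div 2^i + 1) * 2^i" by (simp add: algebra_simps)
  also have "\<dots> = (u + 1) * 2^i" using i(2) by simp
  also have "\<dots> \<le> (u + 1) * 2^h" by (intro mult_le_mono2 power_increasing i(1)) simp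
  finally show "x < (u + 1) * 2^h" .
qed

lemma finite_heap_subtree: "finite (heap_subtree h u)"
proof (rule finite_subset)
  show "heap_subtree h u \<subseteq> {..<(u + 1) * 2^h}" using heap_subtree_bounds(2) by blast
qed simp

lemma heap_subtree_grandchild_subset:
  assumes "l < 4"
  shows "heap_subtree h (4*u + l) \<subseteq> heap_subtree (h + 2) u"
proof
  fix x assume "x \<in> heap_subtree h (4*u + l)"
  then obtain i where i: "i \<le> h" "x div 2^i = 4*u + l" unfolding heap_subtree_def by blast
  have "x div 2^(i + 2) = u"
    using div_power2_diff[of i "i + 2" x] i(2) assms by simp
  then show "x \<in> heap_subtree (h + 2) u"
    unfolding heap_subtree_def using i(1) by (intro CollectI exI[of _ "i + 2"]) simp
qed

lemma heap_subtree_grandchildren_disjoint: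
  assumes "l < 4" "k < 4" "l \<noteq> k" "1 \<le> u"
  shows "heap_subtree h (4*u + l) \<inter> heap_subtree h (4*u + k) = {}"
  using ancestor_same_level_unique[of _ _ "4*u + l" _ "4*u + k" "4*u"] assms
  unfolding heap_subtree_def by auto

lemma median_of_three:
  fixes f :: "nat \<Rightarrow> 'a::linorder"
  obtains k l m where "k < 3" "l < 3" "m < 3" "k \<noteq> l" "k \<noteq> m" "l \<noteq> m" "f l \<le> f k" "f k \<le> f m"
proof -
  consider "f 0 \<le> f 1" "f 1 \<le> f 2" | "f 0 \<le> f 2" "f 2 \<le> f 1" | "f 1 \<le> f 0" "f 0 \<le> f 2"
    | "f 1 \<le> f 2" "f 2 \<le> f 0" | "f 2 \<le> f 0" "f 0 \<le> f 1" | "f 2 \<le> f 1" "f 1 \<le> f 0"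
    by (meson linear)
  then show ?thesis
  proof cases
    case 1 then show ?thesis using that[of 1 0 2] by simp
  next
    case 2 then show ?thesis using that[of 2 0 1] by simp
  next
    case 3 then show ?thesis using that[of 0 1 2] by simp
  next
    case 4 then show ?thesis using that[of 2 1 0] by simp
  next
    case 5 then show ?thesis using that[of 0 2 1] by simp
  next
    case 6 then show ?thesis using that[of 1 2 0] by simp
  qed
qed

locale heap_tree_bags =
  fixes n :: nat and X :: "nat set list"
  assumes interval: "interval_bags X"
    and parent_share: "\<And>w. 2 \<le> w \<Longrightarrow> w \<le> n \<Longrightarrow> share_bag X (w div 2) w"
    and covers: "\<And>v. 1 \<le> v \<Longrightarrow> v \<le> n \<Longrightarrow> \<exists>j<length X. v \<in> X ! j"
begin

lemma heap_subtree_linked: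
  assumes "1 \<le> u" "(u + 1) * 2^h \<le> n + 1" "heap_subtree h u \<subseteq> C" "x \<in> heap_subtree h u"
  shows "(share_bag_in X C)\<^sup>*\<^sup>* u x"
proof -
  have "(share_bag_in X C)\<^sup>*\<^sup>* u x" if "i \<le> h" "x div 2^i = u" for i x
    using that
  proof (induction i arbitrary: x)
    case 0
    then show ?case by simp
  next
    case (Suc i)
    have "x div 2 div 2^i = u" using Suc.prems(2) by (simp add: div_mult2_eq)
    then have linked: "(share_bag_in X C)\<^sup>*\<^sup>* u (x div 2)" using Suc by simp
    have x: "x \<in> heap_subtree h u" unfolding heap_subtree_def using Suc.prems by blast
    have "x div 2 \<in> heap_subtree h u"
      unfolding heap_subtree_def using Suc.prems \<open>x div 2 div 2^i = u\<close> by (intro CollectI exI[of _ i]) simp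
    moreover have "x < n + 1" using heap_subtree_bounds(2)[OF x] assms(2) by linarith
    moreover have "2 \<le> x"
    proof (rule ccontr)
      assume "\<not> 2 \<le> x"
      then have "x div 2^Suc i = 0" by (intro div_less) (simp add: less_le_trans[of x 2])
      then show False using Suc.prems(2) assms(1) by simp
    qed
    ultimately have "share_bag_in X C (x div 2) x"
      using x parent_share assms(3) unfolding share_bag_in_def by auto
    then show ?case by (rule rtranclp.rtrancl_into_rtrancl[OF linked])
  qed
  then show ?thesis using assms(4) unfolding heap_subtree_def by blast
qed

lemma grandchild_subtree_linked_to_root:
  assumes u: "1 \<le> u" "(u + 1) * 2^(g + 2) \<le> n + 1"
    and lk: "l < 4" "k < 4" "l \<noteq> k" and x: "x \<in> heap_subtree g (4*u + l)"
  shows "(share_bag_in X (heap_subtree (g + 2) u - heap_subtree g (4*u + k)))\<^sup>*\<^sup>* u x"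
    (is "?linked\<^sup>*\<^sup>* u x")
proof -
  let ?T = "heap_subtree (g + 2) u" and ?B = "heap_subtree g (4*u + k)"
  let ?c = "4*u + l" and ?p = "2*u + l div 2"
  have fits: "(?c + 1) * 2^g \<le> n + 1"
  proof -
    have "(?c + 1) * 2^g \<le> (4*u + 4) * 2^g" using lk by (intro mult_le_mono1) simp
    also have "\<dots> = (u + 1) * 2^(g + 2)" by (simp add: power_add algebra_simps)
    finally show ?thesis using u(2) by simp
  qed
  have "heap_subtree g ?c \<subseteq> ?T - ?B"
    using heap_subtree_grandchild_subset[of l g u] heap_subtree_grandchildren_disjoint[of l k u g] lk u
    by blast
  then have c_x: "?linked\<^sup>*\<^sup>* ?c x" using heap_subtree_linked[OF _ fits _ x] u by simp
  have "?c \<le> n" using heap_subtree_bounds(2)[OF heap_subtree_root, of ?c g] fits by simp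
  have "?p \<in> ?T" unfolding heap_subtree_def by (intro CollectI exI[of _ 1]) (use lk in auto)
  moreover have "u \<in> ?T" "?c \<in> ?T"
    using heap_subtree_grandchild_subset[of l g u] heap_subtree_root lk by auto
  moreover have "?p \<notin> ?B" "u \<notin> ?B"
    using heap_subtree_bounds(1)[of _ g "4*u + k"] lk u(1) by fastforce+
  moreover have "?c \<notin> ?B"
    using heap_subtree_grandchildren_disjoint[of l k u g] heap_subtree_root[of ?c g] lk u(1) by blast
  moreover have "?c div 2 = ?p" "?p div 2 = u" using lk by presburger+
  then have "share_bag X ?p ?c" "share_bag X u ?p"
    using parent_share[of ?c] parent_share[of ?p] \<open>?c \<le> n\<close> u(1) by auto
  ultimately have "?linked u ?p" "?linked ?p ?c" unfolding share_bag_in_def by auto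
  then show ?thesis using c_x by (meson converse_rtranclp_into_rtranclp)
qed

lemma bag_meeting_heap_subtree_step:
  assumes u: "1 \<le> u" "(u + 1) * 2^(g + 2) \<le> n + 1"
    and J: "\<And>l. l < 3 \<Longrightarrow> J l < length X"
      "\<And>l. l < 3 \<Longrightarrow> g div 2 + 1 \<le> card (X ! J l \<inter> heap_subtree g (4*u + l))"
  shows "\<exists>j<length X. g div 2 + 2 \<le> card (X ! j \<inter> heap_subtree (g + 2) u)"
proof -
  let ?T = "heap_subtree (g + 2) u" and ?B = "\<lambda>l. heap_subtree g (4*u + l)"
  have "\<forall>l\<in>{..<3}. \<exists>y. y \<in> X ! J l \<inter> ?B l"
    using J(2) by (metis card.empty ex_in_conv lessThan_iff not_one_le_zero le_add2 order_trans)
  then obtain x where x: "\<And>l. l < 3 \<Longrightarrow> x l \<in> X ! J l \<inter> ?B l"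
    by (metis lessThan_iff)
  obtain k l m where klm: "k < 3" "l < 3" "m < 3" "k \<noteq> l" "k \<noteq> m" "J l \<le> J k" "J k \<le> J m"
    using median_of_three[of J] by blast
  let ?linked = "share_bag_in X (?T - ?B k)"
  have "?linked\<^sup>*\<^sup>* u (x l)" "?linked\<^sup>*\<^sup>* u (x m)"
    using grandchild_subtree_linked_to_root[OF u, of l k "x l"]
      grandchild_subtree_linked_to_root[OF u, of m k "x m"] x[of l] x[of m] klm
    by auto
  then have chain: "?linked\<^sup>*\<^sup>* (x l) (x m)"
    using sympD[OF symp_rtranclp[OF symp_share_bag_in]] by (meson rtranclp_trans)
  have x_l: "x l \<in> ?T - ?B k"
    using x[of l] klm heap_subtree_grandchild_subset[of l g u]
      heap_subtree_grandchildren_disjoint[of l k u g] u(1) by auto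
  have B_k: "?B k \<subseteq> ?T" using heap_subtree_grandchild_subset[of k g u] klm by simp
  have "x l \<in> X ! J l" "x m \<in> X ! J m" using x klm by auto
  then have "card (X ! J k \<inter> ?B k) < card (X ! J k \<inter> ?T)"
    using share_bag_chain_adds_to_middle_bag[OF interval chain x_l _ _ klm(6,7) J(1)[OF klm(3)] B_k
        finite_heap_subtree] by blast
  then show ?thesis using J[of k] klm by (intro exI[of _ "J k"]) auto
qed

lemma bag_meeting_heap_subtree:
  assumes "1 \<le> u" "(u + 1) * 2^h \<le> n + 1"
  shows "\<exists>j<length X. h div 2 + 1 \<le> card (X ! j \<inter> heap_subtree h u)"
  using assms
proof (induction h arbitrary: u rule: less_induct)
  case (less h)
  show ?case
  proof (cases "h < 2")
    case True
    have "u \<le> n" using heap_subtree_bounds(2)[OF heap_subtree_root, of u h] less.prems by simp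
    then obtain j where j: "j < length X" "u \<in> X ! j" using covers less.prems(1) by blast
    then have "X ! j \<inter> heap_subtree h u \<noteq> {}" using heap_subtree_root by blast
    then have "1 \<le> card (X ! j \<inter> heap_subtree h u)"
      using finite_heap_subtree by (simp add: Suc_le_eq card_gt_0_iff)
    then show ?thesis using j True by auto
  next
    case False
    then obtain g where h: "h = g + 2" by (metis add.commute le_Suc_ex not_less)
    have "\<forall>l\<in>{..<3}. \<exists>j. j < length X \<and> g div 2 + 1 \<le> card (X ! j \<inter> heap_subtree g (4*u + l))"
    proof
      fix l :: nat assume "l \<in> {..<3}"
      then have "(4*u + l + 1) * 2^g \<le> (u + 1) * 2^h" by (simp add: h power_add algebra_simps)
      then show "\<exists>j. j < length X \<and> g div 2 + 1 \<le> card (X ! j \<inter> heap_subtree g (4*u + l))"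
        using less.IH[of g "4*u + l"] less.prems h by auto
    qed
    then obtain J where "\<And>l. l < 3 \<Longrightarrow> J l < length X"
        "\<And>l. l < 3 \<Longrightarrow> g div 2 + 1 \<le> card (X ! J l \<inter> heap_subtree g (4*u + l))"
      by (metis lessThan_iff)
    then show ?thesis using bag_meeting_heap_subtree_step[of u g J] less.prems h by simp
  qed
qed

end

lemma heap_tree_bags_of_decomp:
  assumes X: "dir_path_decomp (cbt_vertices n) (D_edges n) X"
  shows "heap_tree_bags n X"
proof
  show "interval_bags X" using dir_path_decomp_interval_bags[OF X] .
  show "share_bag X (w div 2) w" if "2 \<le> w" "w \<le> n" for w
    using dir_path_decomp_share_bag[OF X] D_edges_parent[OF that] by blast
  show "\<exists>j<length X. v \<in> X ! j" if "1 \<le> v" "v \<le> n" for v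
    using dir_path_decomp_covers[OF X] that by (simp add: cbt_vertices_def)
qed

lemma directed_pathwidth_D_ge:
  assumes "2^(h + 1) \<le> n + 1"
  shows "h div 2 + 1 \<le> directed_pathwidth (cbt_vertices n) (D_edges n)"
proof (rule directed_pathwidth_ge[OF D_edges_subset])
  fix X assume X: "dir_path_decomp (cbt_vertices n) (D_edges n) X"
  obtain j where j: "j < length X" "h div 2 + 1 \<le> card (X ! j \<inter> heap_subtree h 1)"
    using heap_tree_bags.bag_meeting_heap_subtree[OF heap_tree_bags_of_decomp[OF X], of 1 h] assms
    by auto
  have "X ! j \<subseteq> cbt_vertices n" using X j(1) unfolding dir_path_decomp_def by blast
  then have "finite (X ! j)" by (simp add: cbt_vertices_def finite_subset)
  then have "card (X ! j \<inter> heap_subtree h 1) \<le> card (X ! j)" by (intro card_mono) auto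
  then show "\<exists>j<length X. h div 2 + 1 \<le> card (X ! j)" using j by (intro exI[of _ j]) auto
qed

lemma directed_pathwidth_D_ge_ln:
  assumes "2 \<le> n"
  shows "ln (real n) / 4 \<le> real (directed_pathwidth (cbt_vertices n) (D_edges n))"
proof -
  define m where "m = floor_log n"
  have m: "2^m \<le> n" "n < 2 * 2^m"
    using floor_log_exp2_le[of n] floor_log_exp2_gt[of n] assms by (simp_all add: m_def)
  have "floor_log 2 = 1" using floor_log_power[of 1] by simp
  then have "1 \<le> m" using floor_log_le_iff[OF assms] by (simp add: m_def)
  have "2^(m - 1 + 1) \<le> n + 1" using m(1) \<open>1 \<le> m\<close> by simp
  then have "real m \<le> 2 * real (directed_pathwidth (cbt_vertices n) (D_edges n))"
    using directed_pathwidth_D_ge[of "m - 1" n] by linarith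
  moreover have "ln (real n) \<le> 2 * real m"
  proof -
    have "real n < real (2 * 2^m)" using m(2) by (simp only: of_nat_less_iff)
    then have "ln (real n) < ln (2 * 2^m)" using assms by (subst ln_less_cancel_iff) auto
    also have "\<dots> = real (m + 1) * ln 2" by (simp add: ln_mult ln_realpow algebra_simps)
    also have "\<dots> \<le> real (m + 1)" using ln_2_less_1 by (intro mult_left_le) auto
    finally show ?thesis using \<open>1 \<le> m\<close> by simp
  qed
  ultimately show ?thesis by linarith
qed

theorem mainTheorem4:
  shows "(\<forall>n. z_topological (cbt_vertices n) (D_edges n) (preorder n 1) 2
              \<and> zigzag_number (cbt_vertices n) (D_edges n) \<le> 2)
       \<and> (\<exists>c::real > 0. \<exists>N. \<forall>n \<ge> N.
              c * ln (real n) \<le> real (directed_pathwidth (cbt_vertices n) (D_edges n)))"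
  using preorder_z_topological zigzag_number_le_2 directed_pathwidth_D_ge_ln
  by (intro conjI allI exI[of _ "1/4"] exI[of _ 2]) auto

end
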